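(* As closed quantum subgroups of $U_N^+$, $\mathbb TO_N^+\cap U_N^\times=\mathbb TO_N^*$. Equivalently: if the standard coordinates $u_{ij}$ of a closed quantum subgroup $G\subset U_N^+$ satisfy $ab^*=a^*b$ and $ab^*c=cb^*a$ for all $a,b,c\in\{u_{ij}\}$, then they satisfy $abc=cba$ for all $a,b,c\in\{u_{ij},u_{ij}^*\}$.
   Context: $C(U_N^+)$ is the universal unital C*-algebra generated by $u_{ij}$ such that $u=(u_{ij})$ and $\bar u=(u_{ij}^* )$ are unitary, a compact quantum group with $\Delta(u_{ij})=\sum_ku_{ik}\otimes u_{kj}$; closed quantum subgroups correspond to Hopf quotients, and an intersection $G\cap H$ corresponds to imposing both sets of relations. $\mathbb TO_N^+$: impose $ab^*=a^*b$ for $a,b\in\{u_{ij}\}$; $U_N^\times$: impose $ab^*c=cb^*a$ for $a,b,c\in\{u_{ij}\}$; $U_N^{**}$: impose $abc=cba$ for $a,b,c\in\{u_{ij},u_{ij}^*\}$; $\mathbb TO_N^*=\mathbb TO_N^+\cap U_N^{**}$. *)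

theory Defs
  imports Complex_Main
begin

class cstar_algebra = real_normed_algebra_1 + banach +
  fixes scaleC :: "complex \<Rightarrow> 'a \<Rightarrow> 'a"
    and adj :: "'a \<Rightarrow> 'a"
  assumes scaleC_of_real: "scaleC (complex_of_real r) x = scaleR r x"
    and scaleC_add_right: "scaleC c (x + y) = scaleC c x + scaleC c y"
    and scaleC_add_left: "scaleC (c + d) x = scaleC c x + scaleC d x"
    and scaleC_scaleC: "scaleC c (scaleC d x) = scaleC (c * d) x"
    and scaleC_one: "scaleC 1 x = x"
    and scaleC_mult_left: "scaleC c (x * y) = scaleC c x * y"
    and scaleC_mult_right: "scaleC c (x * y) = x * scaleC c y"
    and norm_scaleC: "norm (scaleC c x) = cmod c * norm x"
    and adj_adj: "adj (adj x) = x"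
    and adj_add: "adj (x + y) = adj x + adj y"
    and adj_mult: "adj (x * y) = adj y * adj x"
    and adj_scaleC: "adj (scaleC c x) = scaleC (cnj c) (adj x)"
    and cstar_identity: "norm (adj x * x) = (norm x)\<^sup>2"

text \<open>The matrix u = (u i j) for i,j<N and its conjugate
  (adj (u i j)) are both unitary.\<close>

definition biunitary :: "nat \<Rightarrow> (nat \<Rightarrow> nat \<Rightarrow> 'a::cstar_algebra) \<Rightarrow> bool" where
  "biunitary N u \<longleftrightarrow>
     (\<forall>i<N. \<forall>j<N.
        (\<Sum>k<N. u i k * adj (u j k)) = (if i = j then 1 else 0) \<and>
        (\<Sum>k<N. adj (u k i) * u k j) = (if i = j then 1 else 0) \<and>
        (\<Sum>k<N. adj (u i k) * u j k) = (if i = j then 1 else 0) \<and>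
        (\<Sum>k<N. u k i * adj (u k j)) = (if i = j then 1 else 0))"

definition coords :: "nat \<Rightarrow> (nat \<Rightarrow> nat \<Rightarrow> 'a) \<Rightarrow> 'a set" where
  "coords N u = {u i j | i j. i < N \<and> j < N}"

end

theory Submission
  imports Defs
begin

text \<open>Let S be the set of coordinates. Since u is biunitary, the elements adj x * x with x
  in S (along one column) sum to 1, so abc = cba follows once a b (adj x * x) c =
  c b (adj x * x) a; the latter is a chain of the two given relations, which also make
  adj x * x = x * adj x. The relations with adjoints follow from the given ones and
  from taking adjoints of relations already obtained.\<close>

definition reverses_triples :: "'a::times set \<Rightarrow> bool" where
  "reverses_triples S \<longleftrightarrow> (\<forall>a\<in>S. \<forall>b\<in>S. \<forall>c\<in>S. a * b * c = c * b * a)"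

lemma adj_triple_reversal:
  fixes x y z :: "'a::cstar_algebra"
  assumes "x * y * z = z * y * x"
  shows "adj z * adj y * adj x = adj x * adj y * adj z"
  by (metis assms adj_mult mult.assoc)

lemma triple_reversal_by_partition_of_unity:
  fixes a b c :: "'a::semiring_1"
  assumes "(\<Sum>k\<in>K. p k) = 1"
    and "\<And>k. k \<in> K \<Longrightarrow> a * b * p k * c = c * b * p k * a"
  shows "a * b * c = c * b * a"
proof -
  have "a * b * c = (\<Sum>k\<in>K. a * b * p k * c)"
    by (simp add: assms(1) flip: sum_distrib_left sum_distrib_right)
  also have "\<dots> = (\<Sum>k\<in>K. c * b * p k * a)"
    using assms(2) by (rule sum.cong[OF refl])
  also have "\<dots> = c * b * a"
    by (simp add: assms(1) flip: sum_distrib_left sum_distrib_right)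
  finally show ?thesis .
qed

lemma biunitary_column_sum:
  assumes "biunitary N u" and "j < N"
  shows "(\<Sum>k<N. adj (u k j) * u k j) = 1"
  using assms unfolding biunitary_def by auto

locale torus_orthogonal_half_commuting =
  fixes S :: "'a::cstar_algebra set"
  assumes adj_swap: "\<And>a b. a \<in> S \<Longrightarrow> b \<in> S \<Longrightarrow> a * adj b = adj a * b"
    and half_commute: "\<And>a b c. a \<in> S \<Longrightarrow> b \<in> S \<Longrightarrow> c \<in> S \<Longrightarrow>
      a * adj b * c = c * adj b * a"
begin

lemma triple_reversal_around_square:
  assumes a: "a \<in> S" and b: "b \<in> S" and c: "c \<in> S" and x: "x \<in> S"
  shows "a * b * (adj x * x) * c = c * b * (adj x * x) * a"
proof -
  have normal: "adj x * x = x * adj x" using adj_swap[OF x x] by simp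
  have "a * b * (adj x * x) * c = a * b * (x * adj x * c)"
    using normal by (simp add: mult.assoc)
  also have "\<dots> = a * b * (c * adj x) * x"
    using half_commute[OF x x c] by (simp add: mult.assoc)
  also have "\<dots> = a * (b * adj c) * x * x"
    using adj_swap[OF c x] by (simp add: mult.assoc)
  also have "\<dots> = (a * adj b * c) * x * x"
    using adj_swap[OF b c] by (simp add: mult.assoc)
  also have "\<dots> = c * (adj b * a) * x * x"
    using half_commute[OF a b c] by (simp add: mult.assoc)
  also have "\<dots> = c * b * (adj a * x) * x"
    by (simp add: mult.assoc flip: adj_swap[OF b a])
  also have "\<dots> = c * b * (a * adj x * x)"
    by (simp add: mult.assoc flip: adj_swap[OF a x])
  also have "\<dots> = c * b * (adj x * x) * a"
    using half_commute[OF a x x] normal by (simp add: mult.assoc)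
  finally show ?thesis .
qed

lemma triple_reversal_with_adj_last:
  assumes "a \<in> S" "b \<in> S" "c \<in> S"
  shows "a * b * adj c = adj c * b * a"
proof -
  have "a * b * adj c = a * adj b * c" using adj_swap[OF assms(2,3)] by (simp add: mult.assoc)
  also have "\<dots> = c * adj b * a" using half_commute[OF assms] .
  also have "\<dots> = adj c * b * a" using adj_swap[OF assms(3,2)] by simp
  finally show ?thesis .
qed

lemma reverses_triples_adj_closure:
  assumes "reverses_triples S"
  shows "reverses_triples (S \<union> adj ` S)"
  unfolding reverses_triples_def
proof (intro ballI)
  fix a b c assume "a \<in> S \<union> adj ` S" "b \<in> S \<union> adj ` S" "c \<in> S \<union> adj ` S"
  then obtain a' b' c' where S: "a' \<in> S" "b' \<in> S" "c' \<in> S"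
    and "a = a' \<or> a = adj a'" "b = b' \<or> b = adj b'" "c = c' \<or> c = adj c'"
    by blast
  note plain = assms[unfolded reverses_triples_def, rule_format]
    and last = triple_reversal_with_adj_last and middle = half_commute
  note \<open>a = a' \<or> a = adj a'\<close> \<open>b = b' \<or> b = adj b'\<close> \<open>c = c' \<or> c = adj c'\<close>
  \<comment> \<open>the triples with two or three adjoints are adjoints of those with at most one\<close>
  moreover have "adj a' * adj b' * c' = c' * adj b' * adj a'"
    using adj_triple_reversal[OF last[OF S]] by (simp add: adj_adj)
  moreover have "adj a' * b' * adj c' = adj c' * b' * adj a'"
    using adj_triple_reversal[OF middle[OF S]] by (simp add: adj_adj)
  moreover have "a' * adj b' * adj c' = adj c' * adj b' * a'"
    using adj_triple_reversal[OF last[OF S(3,2,1)]] by (simp add: adj_adj)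
  moreover have "adj a' * adj b' * adj c' = adj c' * adj b' * adj a'"
    using adj_triple_reversal[OF plain[OF S(3,2,1)]] .
  ultimately show "a * b * c = c * b * a"
    using plain[OF S] last[OF S] last[OF S(3,2,1)] middle[OF S] by auto
qed

end

lemma coords_reverse_triples:
  fixes u :: "nat \<Rightarrow> nat \<Rightarrow> 'a::cstar_algebra"
  assumes "biunitary N u" and "torus_orthogonal_half_commuting (coords N u)"
  shows "reverses_triples (coords N u)"
  unfolding reverses_triples_def
proof (intro ballI)
  interpret torus_orthogonal_half_commuting "coords N u" by fact
  fix a b c assume abc: "a \<in> coords N u" "b \<in> coords N u" "c \<in> coords N u"
  then have "0 < N" unfolding coords_def by auto
  show "a * b * c = c * b * a"
  proof (rule triple_reversal_by_partition_of_unity)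
    show "(\<Sum>k\<in>{..<N}. adj (u k 0) * u k 0) = 1"
      using biunitary_column_sum[OF assms(1) \<open>0 < N\<close>] .
    fix k assume "k \<in> {..<N}"
    then have "u k 0 \<in> coords N u" using \<open>0 < N\<close> unfolding coords_def by blast
    with abc show "a * b * (adj (u k 0) * u k 0) * c = c * b * (adj (u k 0) * u k 0) * a"
      by (rule triple_reversal_around_square)
  qed
qed

theorem proposition3p6:
  fixes N :: nat and u :: "nat \<Rightarrow> nat \<Rightarrow> 'a::cstar_algebra"
  assumes "biunitary N u"
    and "\<forall>a\<in>coords N u. \<forall>b\<in>coords N u. a * adj b = adj a * b"
    and "\<forall>a\<in>coords N u. \<forall>b\<in>coords N u. \<forall>c\<in>coords N u.
           a * adj b * c = c * adj b * a"
  shows "\<forall>a\<in>coords N u \<union> adj ` coords N u. \<forall>b\<in>coords N u \<union> adj ` coords N u.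
           \<forall>c\<in>coords N u \<union> adj ` coords N u. a * b * c = c * b * a"
proof -
  have relations: "torus_orthogonal_half_commuting (coords N u)"
    using assms(2,3) by unfold_locales blast+
  have "reverses_triples (coords N u)"
    using coords_reverse_triples[OF assms(1) relations] .
  then have "reverses_triples (coords N u \<union> adj ` coords N u)"
    by (rule torus_orthogonal_half_commuting.reverses_triples_adj_closure[OF relations])
  then show ?thesis
    unfolding reverses_triples_def .
qed

end
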